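(* Let $n\in\mathbb N$, let $\alpha$ be an $n\times n$ matrix, $g\in\mathbb C^n$, $\mu$ purely imaginary ($\overline\mu=-\mu$), with $\det(\mu\alpha\pm I_n)\neq0$ and $\det(\mu\alpha\pm\mathrm{i} I_n)\neq0$. Define $\Pi(x)=\begin{bmatrix}\Lambda_1(x)&\Lambda_2(x)\end{bmatrix}$ on $(-\ell,\ell)$ by $$\Lambda_1(x)=-\mathrm{i}\alpha\big(\mathrm{e}^{\mathrm{i}x\alpha}(\mu\alpha+I_n)g-\mathrm{e}^{-\mathrm{i}x\alpha}(\mu\alpha-I_n)g\big),\quad \Lambda_2(x)=\mathrm{e}^{\mathrm{i}x\alpha}(\mu\alpha+I_n)g+\mathrm{e}^{-\mathrm{i}x\alpha}(\mu\alpha-I_n)g\quad (x\ge0),$$ $$\Lambda_1(x)=-\alpha\big(\mathrm{e}^{x\alpha}(\mu\alpha+\mathrm{i}I_n)g-\mathrm{e}^{-x\alpha}(\mu\alpha-\mathrm{i}I_n)g\big),\quad \Lambda_2(x)=\mathrm{e}^{x\alpha}(\mu\alpha+\mathrm{i}I_n)g+\mathrm{e}^{-x\alpha}(\mu\alpha-\mathrm{i}I_n)g\quad (x\le0),$$ and $S(x)=\int_0^x\Lambda_2(t)\Lambda_2(t)^*dt$ for $x>0$, $S(x)=\int_x^0\Lambda_2(t)\Lambda_2(t)^*dt$ for $x<0$. Assume $\det S(x)\neq0$ for $x\neq0$. Let $J=\begin{bmatrix}0&1\\-1&0\end{bmatrix}$, $X=J\Pi^*S^{-1}\Pi$ with entries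 $X_{ij}$, and $$w_A(x,\lambda)=I_2-J\Pi(x)^*S(x)^{-1}(\alpha^2-\lambda I_n)^{-1}\Pi(x).$$ Let $y(x,\lambda)=T_+(\lambda)\mathrm{e}^{xD_+(\lambda)}T_+(\lambda)^{-1}h$ for $x>0$ and $y(x,\lambda)=T_-(\lambda)\mathrm{e}^{xD_-(\lambda)}T_-(\lambda)^{-1}h$ for $x<0$, with $h\in\mathbb C^2$, $T_+=\begin{bmatrix}1&1\\ \mathrm{i}\sqrt\lambda & -\mathrm{i}\sqrt\lambda\end{bmatrix}$, $D_+=\mathrm{diag}(\mathrm{i}\sqrt\lambda,-\mathrm{i}\sqrt\lambda)$, $T_-=\begin{bmatrix}1&1\\ \sqrt\lambda & -\sqrt\lambda\end{bmatrix}$, $D_-=\mathrm{diag}(\sqrt\lambda,-\sqrt\lambda)$ (any fixed branch of $\sqrt\lambda$). Set $\widetilde y(x,\lambda)=w_A(x,\lambda)y(x,\lambda)$. Then the first entry $\widetilde y_1$ of $\widetilde y$ satisfies, for $x\neq0$, the indefinite Sturm-Liouville equation $$-\widetilde y_1''(x,\lambda)+\breve q(x)\widetilde y_1(x,\lambda)=\lambda\,\mathrm{sgn}(x)\,\widetilde y_1(x,\lambda)\quad(-\ell<x<\ell),$$ where $\breve q(x)=2\,\mathrm{sgn}(x)\big(X_{11}(x)-X_{22}(x)\big)+2X_{12}(x)^2$.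
   Context: Here $y$ solves the initial system $y'=\begin{bmatrix}0&1\\ -\lambda\,\mathrm{sgn}(x)&0\end{bmatrix}y$ (Shin-Zettl with $\omega=\mathrm{sgn}(x)$, $p\equiv1$, $q=r\equiv0$), and $\Pi$, $S$ arise from GBDT with $A=\alpha^2$, $S(0)=0$, $\Pi(0)=\begin{bmatrix}-2\mathrm{i}\alpha g & 2\mu\alpha g\end{bmatrix}$. *)

theory Defs
  imports "HOL-Analysis.Analysis"
begin

primrec mat_pow :: "complex^'n^'n \<Rightarrow> nat \<Rightarrow> complex^'n^'n" where
  "mat_pow A 0 = mat 1"
| "mat_pow A (Suc k) = A ** mat_pow A k"

definition mexp :: "complex^'n^'n \<Rightarrow> complex^'n^'n" where
  "mexp A = (\<Sum>k. (1 / fact k) *\<^sub>R mat_pow A k)"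

definition cadj :: "complex^'m^'n \<Rightarrow> complex^'n^'m" where
  "cadj A = (\<chi> i j. cnj (A $ j $ i))"

definition cscale :: "complex \<Rightarrow> complex^'n^'n \<Rightarrow> complex^'n^'n" where
  "cscale c A = mat c ** A"

text \<open>Lambda_1, Lambda_2 (piecewise, x \<ge> 0 and x < 0; the two formulas agree at 0).\<close>
definition Lam1 :: "complex^'n^'n \<Rightarrow> complex \<Rightarrow> complex^'n \<Rightarrow> real \<Rightarrow> complex^'n" where
  "Lam1 \<alpha> \<mu> g x =
    (if x \<ge> 0 then
       - (cscale \<i> \<alpha> *v
          (mexp (cscale (\<i> * of_real x) \<alpha>) *v ((cscale \<mu> \<alpha> + mat 1) *v g)
           - mexp (cscale (- \<i> * of_real x) \<alpha>) *v ((cscale \<mu> \<alpha> - mat 1) *v g)))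
     else
       - (\<alpha> *v
          (mexp (cscale (of_real x) \<alpha>) *v ((cscale \<mu> \<alpha> + mat \<i>) *v g)
           - mexp (cscale (- of_real x) \<alpha>) *v ((cscale \<mu> \<alpha> - mat \<i>) *v g))))"

definition Lam2 :: "complex^'n^'n \<Rightarrow> complex \<Rightarrow> complex^'n \<Rightarrow> real \<Rightarrow> complex^'n" where
  "Lam2 \<alpha> \<mu> g x =
    (if x \<ge> 0 then
       mexp (cscale (\<i> * of_real x) \<alpha>) *v ((cscale \<mu> \<alpha> + mat 1) *v g)
       + mexp (cscale (- \<i> * of_real x) \<alpha>) *v ((cscale \<mu> \<alpha> - mat 1) *v g)
     else
       mexp (cscale (of_real x) \<alpha>) *v ((cscale \<mu> \<alpha> + mat \<i>) *v g)
       + mexp (cscale (- of_real x) \<alpha>) *v ((cscale \<mu> \<alpha> - mat \<i>) *v g))"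

definition PiM :: "complex^'n^'n \<Rightarrow> complex \<Rightarrow> complex^'n \<Rightarrow> real \<Rightarrow> complex^2^'n" where
  "PiM \<alpha> \<mu> g x = (\<chi> i j. if j = 1 then Lam1 \<alpha> \<mu> g x $ i else Lam2 \<alpha> \<mu> g x $ i)"

definition outer :: "complex^'n \<Rightarrow> complex^'n^'n" where
  "outer v = (\<chi> i j. v $ i * cnj (v $ j))"

definition SM :: "complex^'n^'n \<Rightarrow> complex \<Rightarrow> complex^'n \<Rightarrow> real \<Rightarrow> complex^'n^'n" where
  "SM \<alpha> \<mu> g x =
    (if x > 0 then integral {0..x} (\<lambda>t. outer (Lam2 \<alpha> \<mu> g t))
     else if x < 0 then integral {x..0} (\<lambda>t. outer (Lam2 \<alpha> \<mu> g t))
     else 0)"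

definition Jmat :: "complex^2^2" where
  "Jmat = (\<chi> i j. if i = 1 \<and> j = 2 then 1 else if i = 2 \<and> j = 1 then -1 else 0)"

definition XM :: "complex^'n^'n \<Rightarrow> complex \<Rightarrow> complex^'n \<Rightarrow> real \<Rightarrow> complex^2^2" where
  "XM \<alpha> \<mu> g x = Jmat ** cadj (PiM \<alpha> \<mu> g x) ** matrix_inv (SM \<alpha> \<mu> g x) ** PiM \<alpha> \<mu> g x"

definition wA :: "complex^'n^'n \<Rightarrow> complex \<Rightarrow> complex^'n \<Rightarrow> real \<Rightarrow> complex \<Rightarrow> complex^2^2" where
  "wA \<alpha> \<mu> g x lam = mat 1 - Jmat ** cadj (PiM \<alpha> \<mu> g x) ** matrix_inv (SM \<alpha> \<mu> g x)
        ** matrix_inv (\<alpha> ** \<alpha> - mat lam) ** PiM \<alpha> \<mu> g x"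

definition qbreve :: "complex^'n^'n \<Rightarrow> complex \<Rightarrow> complex^'n \<Rightarrow> real \<Rightarrow> complex" where
  "qbreve \<alpha> \<mu> g x = 2 * of_real (sgn x) * (XM \<alpha> \<mu> g x $ 1 $ 1 - XM \<alpha> \<mu> g x $ 2 $ 2)
                      + 2 * (XM \<alpha> \<mu> g x $ 1 $ 2)^2"

text \<open>Solution y of the initial system; s is a fixed square root of lambda.
  For x > 0 use T_+, D_+; for x < 0 use T_-, D_- (value at 0 irrelevant; we use the x<0 branch).\<close>
definition Tp :: "complex \<Rightarrow> complex^2^2" where
  "Tp s = (\<chi> i j. if i = 1 then 1 else if j = 1 then \<i> * s else - \<i> * s)"
definition Dp :: "complex \<Rightarrow> complex^2^2" where
  "Dp s = (\<chi> i j. if i = j then (if i = 1 then \<i> * s else - \<i> * s) else 0)"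
definition Tm :: "complex \<Rightarrow> complex^2^2" where
  "Tm s = (\<chi> i j. if i = 1 then 1 else if j = 1 then s else - s)"
definition Dm :: "complex \<Rightarrow> complex^2^2" where
  "Dm s = (\<chi> i j. if i = j then (if i = 1 then s else - s) else 0)"

definition yinit :: "complex \<Rightarrow> complex^2 \<Rightarrow> real \<Rightarrow> complex^2" where
  "yinit s h x =
    (if x > 0 then (Tp s ** mexp (cscale (of_real x) (Dp s)) ** matrix_inv (Tp s)) *v h
     else (Tm s ** mexp (cscale (of_real x) (Dm s)) ** matrix_inv (Tm s)) *v h)"

end

theory Submission
  imports Defs
begin

(* On each half-line, with \<sigma> = sgn x and A = \<alpha>^2, the matrix \<Pi> = [\<Lambda>1 \<Lambda>2] solves
   \<Lambda>2' = -\<Lambda>1 and \<Lambda>1' = \<sigma> A \<Lambda>2, while S' = \<sigma> F with F = \<Lambda>2 \<Lambda>2^*.  Hence \<Phi> = \<Pi> J \<Pi>^*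
   has \<Phi>' = \<sigma> A F - \<sigma> F A^*, and since \<Phi>(0) = 0 for purely imaginary \<mu>, integrating gives
   A S - S A^* = \<Pi> J \<Pi>^*.
   Put T = S^-1, R = (A - \<lambda>)^-1, M = \<Pi>^* T \<Pi>, N = \<Pi>^* T R \<Pi> and w = I - J N.  The identity
   expresses N' through M and N alone, and a 2x2 computation turns this into w' = G~ w - w G, where
   y' = G y with G = [0 1; -\<lambda>\<sigma> 0] and G~ = [-\<sigma>m 1; \<sigma>(k - \<lambda>) \<sigma>m], m = M22, k = M12 + M21.
   So y~ = w y solves y~' = G~ y~, and m satisfies the Riccati equation m' = -k - \<sigma> m^2.
   Eliminating y~2 gives -y~1'' + (2\<sigma>k + 2m^2) y~1 = \<lambda>\<sigma> y~1, and 2\<sigma>k + 2m^2 is q. *)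

interpretation matrix_mult: bounded_bilinear "(**) :: complex^'m^'n \<Rightarrow> complex^'k^'m \<Rightarrow> complex^'k^'n"
proof -
  have "bilinear ((**) :: complex^'m^'n \<Rightarrow> complex^'k^'m \<Rightarrow> complex^'k^'n)"
    by (auto intro!: linearI simp: bilinear_def matrix_add_ldistrib scalar_matrix_assoc matrix_scalar_ac)
       (simp add: matrix_matrix_mult_def vec_eq_iff sum.distrib algebra_simps)+
  then show "bounded_bilinear ((**) :: complex^'m^'n \<Rightarrow> complex^'k^'m \<Rightarrow> complex^'k^'n)"
    by (simp add: bilinear_conv_bounded_bilinear)
qed

interpretation matrix_vector_mult: bounded_bilinear "(*v) :: complex^'m^'n \<Rightarrow> complex^'m \<Rightarrow> complex^'n"
proof -
  have "bilinear ((*v) :: complex^'m^'n \<Rightarrow> complex^'m \<Rightarrow> complex^'n)"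
    by (auto intro!: linearI simp: bilinear_def vec_eq_iff matrix_vector_mult_def
        scaleR_conv_of_real[where 'a=complex] sum_distrib_left sum.distrib algebra_simps)
  then show "bounded_bilinear ((*v) :: complex^'m^'n \<Rightarrow> complex^'m \<Rightarrow> complex^'n)"
    by (simp add: bilinear_conv_bounded_bilinear)
qed

lemma mat_mult_commute: "mat c ** (A :: 'a::comm_semiring_1^'m^'n) = A ** mat c"
  by (simp add: matrix_matrix_mult_def mat_def vec_eq_iff if_distrib if_distribR mult.commute cong: if_cong)

lemma cadj_mult: "cadj ((A :: complex^'m^'n) ** B) = cadj B ** cadj A"
  by (simp add: cadj_def matrix_matrix_mult_def vec_eq_iff mult.commute)

lemma cadj_diff: "cadj (A - B) = cadj A - cadj B"
  by (simp add: cadj_def vec_eq_iff)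

lemma cadj_scaleR: "cadj (r *\<^sub>R A) = r *\<^sub>R cadj A"
  by (simp add: cadj_def vec_eq_iff scaleR_conv_of_real[where 'a=complex])

lemma bounded_linear_cadj: "bounded_linear (cadj :: complex^'m^'n \<Rightarrow> complex^'n^'m)"
  by (auto intro!: linearI simp: linear_conv_bounded_linear[symmetric] cadj_def vec_eq_iff
      scaleR_conv_of_real[where 'a=complex])

lemmas matrix_normalize = matrix_mul_assoc matrix_mult.add_left matrix_mult.add_right matrix_mult.diff_left
  matrix_mult.diff_right matrix_mult.minus_left matrix_mult.minus_right matrix_mult.scaleR_left
  matrix_mult.scaleR_right cadj_diff cadj_scaleR cadj_mult

definition matrix_unit :: "'n \<Rightarrow> 'm \<Rightarrow> complex^'m^'n" where
  "matrix_unit i j = (\<chi> k l. if k = i \<and> l = j then 1 else 0)"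

lemma cadj_matrix_unit [simp]: "cadj (matrix_unit i j) = matrix_unit j i"
  by (auto simp: cadj_def matrix_unit_def vec_eq_iff)

lemma matrix_inv_right: "det (A :: 'a::field^'n^'n) \<noteq> 0 \<Longrightarrow> A ** matrix_inv A = mat 1"
  and matrix_inv_left: "det (A :: 'a::field^'n^'n) \<noteq> 0 \<Longrightarrow> matrix_inv A ** A = mat 1"
  using someI_ex[of "\<lambda>A'. A ** A' = mat 1 \<and> A' ** A = mat 1"]
  by (auto simp: matrix_inv_def invertible_det_nz[symmetric] invertible_def)

lemma matrix_inv_component:
  fixes A :: "'a::field^'n^'n"
  assumes "det A \<noteq> 0"
  shows "matrix_inv A $ i $ j = det (\<chi> k l. if l = i then axis j 1 $ k else A $ k $ l) / det A"
proof -
  have "A *v (matrix_inv A *v axis j 1) = axis j 1"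
    by (simp add: matrix_vector_mul_assoc matrix_inv_right[OF assms])
  then have "(matrix_inv A *v axis j 1) $ i = det (\<chi> k l. if l = i then axis j 1 $ k else A $ k $ l) / det A"
    by (simp add: cramer[OF assms])
  moreover have "(matrix_inv A *v axis j 1) $ i = matrix_inv A $ i $ j"
    by (simp add: matrix_vector_mult_def axis_def if_distrib if_distribR cong: if_cong)
  ultimately show ?thesis
    by simp
qed

text \<open>The left factor \<open>X\<close> lets the identity act as a rewrite rule on left-associated products.\<close>

lemma matrix_inv_commutator:
  fixes A S :: "complex^'n^'n" and P :: "complex^'k^'n" and K :: "complex^'k^'k" and X :: "complex^'n^'m"
  assumes "det S \<noteq> 0" and "A ** S - S ** cadj A = P ** K ** cadj P"
  shows "X ** cadj A ** matrix_inv S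
           = X ** matrix_inv S ** A - X ** matrix_inv S ** P ** K ** cadj P ** matrix_inv S"
proof -
  have "matrix_inv S ** (A ** S - S ** cadj A) ** matrix_inv S
      = matrix_inv S ** A ** (S ** matrix_inv S) - (matrix_inv S ** S) ** cadj A ** matrix_inv S"
    by (simp add: matrix_normalize)
  then have "cadj A ** matrix_inv S = matrix_inv S ** A - matrix_inv S ** (P ** K ** cadj P) ** matrix_inv S"
    by (simp add: assms matrix_inv_left matrix_inv_right)
  then show ?thesis
    by (metis matrix_mult.diff_right matrix_mul_assoc)
qed

lemma mult_resolvent: "A ** matrix_inv (A - mat lam) = mat 1 + mat lam ** matrix_inv (A - mat lam)"
  and resolvent_mult: "matrix_inv (A - mat lam) ** A = mat 1 + mat lam ** matrix_inv (A - mat lam)"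
  if "det (A - mat lam :: complex^'n^'n) \<noteq> 0"
  using matrix_inv_right[OF that] matrix_inv_left[OF that]
  by (simp_all add: matrix_normalize mat_mult_commute algebra_simps)

section \<open>Differentiating matrix-valued functions\<close>

lemma bounded_linear_axis: "bounded_linear (axis i :: 'a::euclidean_space \<Rightarrow> 'a^'n)"
  by (auto intro!: linearI simp: linear_conv_bounded_linear[symmetric] axis_def vec_eq_iff)

lemma has_vector_derivative_vec:
  fixes f :: "real \<Rightarrow> 'a::euclidean_space^'n"
  assumes "\<And>i. ((\<lambda>t. f t $ i) has_vector_derivative f' $ i) F"
  shows "(f has_vector_derivative f') F"
proof -
  have expand: "v = (\<Sum>i\<in>UNIV. axis i (v $ i))" for v :: "'a^'n"
    by (simp add: vec_eq_iff axis_def)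
  have "((\<lambda>t. \<Sum>i\<in>UNIV. axis i (f t $ i)) has_vector_derivative (\<Sum>i\<in>UNIV. axis i (f' $ i))) F"
    by (intro has_vector_derivative_sum bounded_linear.has_vector_derivative[OF bounded_linear_axis] assms)
  then show ?thesis
    by (simp flip: expand)
qed

lemma differentiable_matrix:
  fixes f :: "real \<Rightarrow> complex^'m^'n"
  assumes "\<And>i j. (\<lambda>t. f t $ i $ j) differentiable (at x)"
  shows "f differentiable (at x)"
proof -
  have "(f has_vector_derivative (\<chi> i j. vector_derivative (\<lambda>t. f t $ i $ j) (at x))) (at x)"
    using assms by (intro has_vector_derivative_vec) (simp add: vector_derivative_works[symmetric])
  then show ?thesis
    by (rule differentiableI_vector)
qed

lemma differentiable_prod:
  fixes f :: "'i \<Rightarrow> real \<Rightarrow> 'a::real_normed_field"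
  assumes "finite I" "\<And>i. i \<in> I \<Longrightarrow> f i differentiable (at x)"
  shows "(\<lambda>t. \<Prod>i\<in>I. f i t) differentiable (at x)"
proof -
  obtain f' where "\<And>i. i \<in> I \<Longrightarrow> (f i has_derivative f' i) (at x)"
    using assms(2) unfolding differentiable_def by metis
  then show ?thesis
    unfolding differentiable_def by (blast intro: has_derivative_prod)
qed

lemma differentiable_det:
  fixes F :: "real \<Rightarrow> 'a::real_normed_field^'n^'n"
  assumes "\<And>i j. (\<lambda>t. F t $ i $ j) differentiable (at x)"
  shows "(\<lambda>t. det (F t)) differentiable (at x)"
  unfolding det_def using assms
  by (intro differentiable_sum ballI differentiable_mult differentiable_const differentiable_prod
      finite_permutations) auto

lemma differentiable_matrix_inv:
  fixes S :: "real \<Rightarrow> complex^'n^'n"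
  assumes S: "S differentiable (at x)" and U: "open U" "x \<in> U" and det: "\<And>t. t \<in> U \<Longrightarrow> det (S t) \<noteq> 0"
  shows "(\<lambda>t. matrix_inv (S t)) differentiable (at x)"
proof (rule differentiable_matrix)
  fix i j
  have entry: "(\<lambda>t. S t $ k $ l) differentiable (at x)" for k l
    using S by (intro differentiable_compose[OF bounded_linear_imp_differentiable[OF bounded_linear_vec_nth]
        differentiable_compose[OF bounded_linear_imp_differentiable[OF bounded_linear_vec_nth]]])
  have column_replaced: "(\<lambda>t. if l = i then axis j 1 $ k else S t $ k $ l) differentiable (at x)" for k l
    by (cases "l = i") (simp_all add: entry)
  have "(\<lambda>t. det (\<chi> k l. if l = i then axis j 1 $ k else S t $ k $ l) / det (S t)) differentiable (at x)"
    using det[OF U(2)] by (intro differentiable_divide differentiable_det) (simp_all add: column_replaced entry)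
  then obtain D where "((\<lambda>t. det (\<chi> k l. if l = i then axis j 1 $ k else S t $ k $ l) / det (S t))
      has_derivative D) (at x)"
    unfolding differentiable_def by blast
  then have "((\<lambda>t. matrix_inv (S t) $ i $ j) has_derivative D) (at x)"
    by (rule has_derivative_transform_within_open[OF _ U]) (simp add: matrix_inv_component det)
  then show "(\<lambda>t. matrix_inv (S t) $ i $ j) differentiable (at x)"
    unfolding differentiable_def by blast
qed

lemma has_vector_derivative_matrix_inv:
  fixes S :: "real \<Rightarrow> complex^'n^'n"
  assumes S': "(S has_vector_derivative S') (at x)"
    and U: "open U" "x \<in> U" and det: "\<And>t. t \<in> U \<Longrightarrow> det (S t) \<noteq> 0"
  shows "((\<lambda>t. matrix_inv (S t)) has_vector_derivative - (matrix_inv (S x) ** S' ** matrix_inv (S x))) (at x)"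
proof -
  define T where "T = (\<lambda>t. matrix_inv (S t))"
  define T' where "T' = vector_derivative T (at x)"
  have T': "(T has_vector_derivative T') (at x)"
    unfolding T'_def T_def
    by (rule vector_derivative_works[THEN iffD1,
          OF differentiable_matrix_inv[OF differentiableI_vector[OF S'] U det]])
  have "((\<lambda>t. S t ** T t) has_vector_derivative S x ** T' + S' ** T x) (at x)"
    by (rule matrix_mult.has_vector_derivative[OF S' T'])
  moreover have "((\<lambda>t. S t ** T t) has_vector_derivative 0) (at x)"
    by (rule has_vector_derivative_transform_within_open[OF has_vector_derivative_const U])
       (simp add: T_def matrix_inv_right det)
  ultimately have "S x ** T' + S' ** T x = 0"
    by (rule vector_derivative_unique_at)
  then have ST': "S x ** T' = - (S' ** T x)"
    by (simp add: eq_neg_iff_add_eq_0)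
  have "T' = T x ** (S x ** T')"
    by (simp add: matrix_mul_assoc T_def matrix_inv_left[OF det[OF U(2)]])
  also have "\<dots> = - (T x ** S' ** T x)"
    by (simp add: ST' matrix_mult.minus_right matrix_mul_assoc)
  finally show ?thesis
    using T' by (simp add: T_def)
qed

lemma has_vector_derivative_cadj_sandwich:
  fixes P :: "real \<Rightarrow> complex^'m^'n" and K :: "real \<Rightarrow> complex^'n^'n"
  assumes "(P has_vector_derivative P') (at x)" "(K has_vector_derivative K') (at x)"
  shows "((\<lambda>t. cadj (P t) ** K t ** P t) has_vector_derivative
           cadj P' ** K x ** P x + cadj (P x) ** K' ** P x + cadj (P x) ** K x ** P') (at x)"
proof -
  have "((\<lambda>t. cadj (P t)) has_vector_derivative cadj P') (at x)"
    by (rule bounded_linear.has_vector_derivative[OF bounded_linear_cadj assms(1)])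
  from matrix_mult.has_vector_derivative[OF matrix_mult.has_vector_derivative[OF this assms(2)] assms(1)]
  show ?thesis
    by (simp add: matrix_mult.add_left algebra_simps)
qed

lemma continuous_on_cadj_sandwich:
  fixes P :: "real \<Rightarrow> complex^'m^'n"
  assumes "\<And>t. P differentiable (at t)"
  shows "continuous_on X (\<lambda>t. P t ** K ** cadj (P t))"
proof -
  have "continuous_on X P"
    using assms by (meson continuous_at_imp_continuous_on differentiable_imp_continuous_within)
  then show ?thesis
    by (intro matrix_mult.continuous_on continuous_on_const bounded_linear.continuous_on[OF bounded_linear_cadj])
qed

lemma has_vector_derivative_integral_upper:
  fixes f :: "real \<Rightarrow> 'a::banach"
  assumes "continuous_on UNIV f" "a < x"
  shows "((\<lambda>u. integral {a..u} f) has_vector_derivative f x) (at x)"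
proof -
  have "((\<lambda>u. integral {a..u} f) has_vector_derivative f x) (at x within {a..x + 1})"
    using assms by (intro integral_has_vector_derivative) (auto intro: continuous_on_subset)
  then have "((\<lambda>u. integral {a..u} f) has_vector_derivative f x) (at x within {a<..<x + 1})"
    by (rule has_vector_derivative_within_subset) auto
  then show ?thesis
    using has_vector_derivative_within_open[of x "{a<..<x + 1}"] assms(2) by auto
qed

lemma has_vector_derivative_integral_lower:
  fixes f :: "real \<Rightarrow> 'a::banach"
  assumes "continuous_on UNIV f" "x < b"
  shows "((\<lambda>u. integral {u..b} f) has_vector_derivative - f x) (at x)"
proof -
  have "((\<lambda>u. integral {u..b} f) has_vector_derivative - f x) (at x within {x - 1..b})"
    using assms by (intro integral_has_vector_derivative') (auto intro: continuous_on_subset)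
  then have "((\<lambda>u. integral {u..b} f) has_vector_derivative - f x) (at x within {x - 1<..<b})"
    by (rule has_vector_derivative_within_subset) auto
  then show ?thesis
    using has_vector_derivative_within_open[of x "{x - 1<..<b}"] assms(2) by auto
qed

section \<open>The matrix exponential\<close>

lemma mat_pow_scaleR: "mat_pow (t *\<^sub>R B) k = t ^ k *\<^sub>R mat_pow B k"
  by (induction k) (simp_all add: matrix_scalar_ac flip: scalar_matrix_assoc)

lemma mexp_scaleR: "mexp (t *\<^sub>R B) = (\<Sum>k. (t ^ k / fact k) *\<^sub>R mat_pow B k)"
  by (simp add: mexp_def mat_pow_scaleR)

lemma mexp_zero [simp]: "mexp 0 = mat 1"
proof -
  have terms: "(1 / fact k) *\<^sub>R mat_pow (0 :: complex^'n^'n) k = (if k = 0 then mat 1 else 0)" for k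
    by (cases k) simp_all
  show ?thesis
    unfolding mexp_def terms using sums_single[of 0 "\<lambda>_. mat 1 :: complex^'n^'n"] by (simp add: sums_iff)
qed

lemma norm_mat_pow_le:
  fixes B :: "complex^'n^'n"
  obtains C c where "C \<ge> 0" "c \<ge> 0" "\<And>k. norm (mat_pow B k) \<le> C * c ^ k"
proof -
  obtain K where K: "K > 0" "\<And>X (Y :: complex^'n^'n). norm ((X :: complex^'n^'n) ** Y) \<le> norm X * norm Y * K"
    using matrix_mult.pos_bounded by blast
  have bound: "norm (mat_pow B k) \<le> norm (mat 1 :: complex^'n^'n) * (K * norm B) ^ k" for k
  proof (induction k)
    case (Suc k)
    have "norm (mat_pow B (Suc k)) \<le> norm B * norm (mat_pow B k) * K"
      unfolding mat_pow.simps by (rule K(2))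
    also have "\<dots> \<le> norm B * (norm (mat 1 :: complex^'n^'n) * (K * norm B) ^ k) * K"
      using Suc K(1) by (intro mult_right_mono mult_left_mono) auto
    finally show ?case
      by (simp add: algebra_simps)
  qed simp
  show ?thesis
    by (rule that[OF _ _ bound]) (use K(1) in simp_all)
qed

lemma summable_mexp_series: "summable (\<lambda>n. (t ^ n / fact n) *\<^sub>R mat_pow (B :: complex^'n^'n) n)"
proof -
  obtain C c where bound: "\<And>k. norm (mat_pow B k) \<le> C * c ^ k"
    using norm_mat_pow_le[of B] by blast
  show ?thesis
  proof (rule summable_comparison_test')
    show "summable (\<lambda>n. C * ((\<bar>t\<bar> * c) ^ n / fact n))"
      using summable_exp[of "\<bar>t\<bar> * c"] by (intro summable_mult) (simp add: field_simps)
    show "norm ((t ^ n / fact n) *\<^sub>R mat_pow B n) \<le> C * ((\<bar>t\<bar> * c) ^ n / fact n)" for n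
      using mult_left_mono[OF bound, of "\<bar>t\<bar> ^ n / fact n" n]
      by (simp add: power_abs algebra_simps)
  qed
qed

lemma sums_mexp_derivative_series:
  "(\<lambda>n. (of_nat n * t ^ (n - 1) / fact n) *\<^sub>R mat_pow B n) sums (B ** mexp (t *\<^sub>R B))"
proof -
  have "(\<lambda>n. B ** ((t ^ n / fact n) *\<^sub>R mat_pow B n)) sums (B ** mexp (t *\<^sub>R B))"
    unfolding mexp_scaleR
    by (intro bounded_linear.sums[OF matrix_mult.bounded_linear_right] summable_sums summable_mexp_series)
  moreover have "B ** ((t ^ n / fact n) *\<^sub>R mat_pow B n)
      = (of_nat (Suc n) * t ^ (Suc n - 1) / fact (Suc n)) *\<^sub>R mat_pow B (Suc n)" for n
    by (simp add: matrix_mult.scaleR_right divide_simps)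
  ultimately show ?thesis
    using sums_Suc_iff[of "\<lambda>n. (of_nat n * t ^ (n - 1) / fact n) *\<^sub>R mat_pow B n"] by simp
qed

lemma uniform_limit_mexp_derivative_series:
  "uniform_limit {-R<..<R} (\<lambda>n t. \<Sum>i<n. (of_nat i * t ^ (i - 1) / fact i) *\<^sub>R mat_pow B i)
     (\<lambda>t. B ** mexp (t *\<^sub>R B)) sequentially"
proof -
  obtain C c where Cc: "C \<ge> 0" "c \<ge> 0" and bound: "\<And>k. norm (mat_pow B k) \<le> C * c ^ k"
    using norm_mat_pow_le[of B] by blast
  have limit: "uniform_limit {-R<..<R} (\<lambda>n t. \<Sum>i<n. (of_nat i * t ^ (i - 1) / fact i) *\<^sub>R mat_pow B i)
      (\<lambda>t. \<Sum>i. (of_nat i * t ^ (i - 1) / fact i) *\<^sub>R mat_pow B i) sequentially"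
  proof (rule Weierstrass_m_test)
    have "summable (\<lambda>n. C * c * ((R * c) ^ n / fact n))"
      using summable_exp[of "R * c"] by (intro summable_mult) (simp add: field_simps)
    then have "summable (\<lambda>n. C * (of_nat (Suc n) * R ^ (Suc n - 1) * c ^ Suc n / fact (Suc n)))"
      by (simp add: divide_simps mult_ac)
    then show "summable (\<lambda>n. C * (of_nat n * R ^ (n - 1) * c ^ n / fact n))"
      by (subst summable_Suc_iff[symmetric])
    fix n t
    assume "t \<in> {-R<..<R}"
    then have "\<bar>t\<bar> \<le> R"
      by auto
    then have "norm ((of_nat n * t ^ (n - 1) / fact n) *\<^sub>R mat_pow B n)
        \<le> (of_nat n * R ^ (n - 1) / fact n) * (C * c ^ n)"
      using Cc by (auto simp: power_abs abs_mult intro!: mult_mono divide_right_mono power_mono bound)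
    then show "norm ((of_nat n * t ^ (n - 1) / fact n) *\<^sub>R mat_pow B n)
        \<le> C * (of_nat n * R ^ (n - 1) * c ^ n / fact n)"
      by (simp add: mult_ac)
  qed
  moreover have "(\<lambda>t. \<Sum>i. (of_nat i * t ^ (i - 1) / fact i) *\<^sub>R mat_pow B i) = (\<lambda>t. B ** mexp (t *\<^sub>R B))"
    by (rule ext, rule sums_unique[OF sums_mexp_derivative_series, symmetric])
  ultimately show ?thesis
    by simp
qed

lemma has_vector_derivative_mexp:
  "((\<lambda>t. mexp (t *\<^sub>R B)) has_vector_derivative B ** mexp (t0 *\<^sub>R B)) (at t0)"
proof -
  define f where "f n t = (t ^ n / fact n) *\<^sub>R mat_pow B n" for n t
  define f' where "f' n t = (of_nat n * t ^ (n - 1) / fact n) *\<^sub>R mat_pow B n" for n t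
  define S where "S = {- (\<bar>t0\<bar> + 1)<..<\<bar>t0\<bar> + 1}"
  have S: "open S" "convex S" "t0 \<in> S"
    by (auto simp: S_def)
  have "\<exists>g. \<forall>t\<in>S. (\<lambda>n. f n t) sums g t \<and> (g has_derivative (\<lambda>h. h *\<^sub>R (B ** mexp (t *\<^sub>R B)))) (at t within S)"
  proof (rule has_derivative_series[where f' = "\<lambda>n t h. h *\<^sub>R f' n t"])
    fix n t
    have "((\<lambda>t. t ^ n / fact n) has_real_derivative of_nat n * t ^ (n - 1) / fact n) (at t within S)"
      by (auto intro!: derivative_eq_intros)
    then have "((\<lambda>t. (t ^ n / fact n) *\<^sub>R mat_pow B n) has_vector_derivative
        (t ^ n / fact n) *\<^sub>R 0 + (of_nat n * t ^ (n - 1) / fact n) *\<^sub>R mat_pow B n) (at t within S)"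
      by (rule has_vector_derivative_scaleR) simp
    then show "(f n has_derivative (\<lambda>h. h *\<^sub>R f' n t)) (at t within S)"
      by (simp add: f_def[abs_def] f'_def has_vector_derivative_def)
  next
    fix e :: real
    assume "e > 0"
    with uniform_limit_mexp_derivative_series[where R = "\<bar>t0\<bar> + 1" and B = B]
    have "\<forall>\<^sub>F n in sequentially. \<forall>t\<in>S. norm ((\<Sum>i<n. f' i t) - B ** mexp (t *\<^sub>R B)) < e"
      by (auto dest!: uniform_limitD simp: S_def f'_def dist_norm)
    then show "\<forall>\<^sub>F n in sequentially. \<forall>t\<in>S. \<forall>h.
        norm ((\<Sum>i<n. h *\<^sub>R f' i t) - h *\<^sub>R (B ** mexp (t *\<^sub>R B))) \<le> e * norm h"
    proof eventually_elim
      case (elim n)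
      show ?case
      proof (intro ballI allI)
        fix t h
        assume "t \<in> S"
        with elim have "\<bar>h\<bar> * norm ((\<Sum>i<n. f' i t) - B ** mexp (t *\<^sub>R B)) \<le> e * \<bar>h\<bar>"
          by (metis abs_ge_zero less_imp_le mult.commute mult_left_mono)
        then show "norm ((\<Sum>i<n. h *\<^sub>R f' i t) - h *\<^sub>R (B ** mexp (t *\<^sub>R B))) \<le> e * norm h"
          by (simp flip: scaleR_sum_right scaleR_diff_right)
      qed
    qed
  qed (use S summable_mexp_series in \<open>auto simp: f_def\<close>)
  then obtain g where g: "\<And>t. t \<in> S \<Longrightarrow> (\<lambda>n. f n t) sums g t \<and>
      (g has_derivative (\<lambda>h. h *\<^sub>R (B ** mexp (t *\<^sub>R B)))) (at t within S)"
    by blast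
  have "(g has_vector_derivative B ** mexp (t0 *\<^sub>R B)) (at t0)"
    using g[OF S(3)] at_within_open[OF S(3,1)] by (simp add: has_vector_derivative_def)
  then show ?thesis
    by (rule has_vector_derivative_transform_within_open[OF _ S(1,3)])
       (use g in \<open>simp add: f_def mexp_scaleR sums_unique\<close>)
qed

section \<open>The Darboux transformation\<close>

text \<open>With \<open>m = k = 0\<close> this is the matrix of the initial system \<open>y' = [0 1; -\<lambda>\<sigma> 0] y\<close>.\<close>

definition sl_system_matrix :: "real \<Rightarrow> complex \<Rightarrow> complex \<Rightarrow> complex \<Rightarrow> complex^2^2" where
  "sl_system_matrix \<sigma> lam m k =
     vector [vector [- of_real \<sigma> * m, 1], vector [of_real \<sigma> * (k - lam), of_real \<sigma> * m]]"

lemma sl_system_matrix_mult: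
  "sl_system_matrix \<sigma> lam m k *v u =
     vector [- of_real \<sigma> * m * u $ 1 + u $ 2, of_real \<sigma> * (k - lam) * u $ 1 + of_real \<sigma> * m * u $ 2]"
  by (simp add: sl_system_matrix_def matrix_vector_mult_def vec_eq_iff forall_2 sum_2)

lemma sturm_liouville_of_sl_system:
  fixes u :: "real \<Rightarrow> complex^2" and m k :: "real \<Rightarrow> complex" and \<sigma> :: "real \<Rightarrow> real"
  assumes \<sigma>: "\<forall>\<^sub>F t in nhds x. \<sigma> t = \<sigma> x"
    and u': "(u has_vector_derivative sl_system_matrix (\<sigma> x) lam (m x) (k x) *v u x) (at x)"
    and m': "(m has_vector_derivative - k x - of_real (\<sigma> x) * m x ^ 2) (at x)"
  shows "((\<lambda>t. u t $ 1) has_vector_derivative - of_real (\<sigma> x) * m x * u x $ 1 + u x $ 2) (at x)"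
    and "((\<lambda>t. - of_real (\<sigma> t) * m t * u t $ 1 + u t $ 2) has_vector_derivative
           (2 * of_real (\<sigma> x) * k x + 2 * of_real (\<sigma> x) ^ 2 * m x ^ 2 - lam * of_real (\<sigma> x)) * u x $ 1)
          (at x)"
proof -
  have u'_comp: "((\<lambda>t. u t $ i) has_vector_derivative (sl_system_matrix (\<sigma> x) lam (m x) (k x) *v u x) $ i) (at x)"
    for i
    by (rule bounded_linear.has_vector_derivative[OF bounded_linear_vec_nth u'])
  show u1': "((\<lambda>t. u t $ 1) has_vector_derivative - of_real (\<sigma> x) * m x * u x $ 1 + u x $ 2) (at x)"
    using u'_comp[of 1] by (simp add: sl_system_matrix_mult)
  have u2': "((\<lambda>t. u t $ 2) has_vector_derivative
      of_real (\<sigma> x) * (k x - lam) * u x $ 1 + of_real (\<sigma> x) * m x * u x $ 2) (at x)"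
    using u'_comp[of 2] by (simp add: sl_system_matrix_mult)
  have "((\<lambda>t. - of_real (\<sigma> x) * m t * u t $ 1 + u t $ 2) has_vector_derivative
         - of_real (\<sigma> x) * (m x * (- of_real (\<sigma> x) * m x * u x $ 1 + u x $ 2)
           + (- k x - of_real (\<sigma> x) * m x ^ 2) * u x $ 1)
         + (of_real (\<sigma> x) * (k x - lam) * u x $ 1 + of_real (\<sigma> x) * m x * u x $ 2)) (at x)"
    using has_vector_derivative_add[OF has_vector_derivative_mult[OF
          has_vector_derivative_mult[OF has_vector_derivative_const[of "- of_real (\<sigma> x)"] m'] u1'] u2']
    by (simp add: algebra_simps)
  moreover have "\<forall>\<^sub>F t in nhds x. - of_real (\<sigma> t) * m t * u t $ 1 + u t $ 2
      = - of_real (\<sigma> x) * m t * u t $ 1 + u t $ 2"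
    using \<sigma> by eventually_elim simp
  ultimately show "((\<lambda>t. - of_real (\<sigma> t) * m t * u t $ 1 + u t $ 2) has_vector_derivative
           (2 * of_real (\<sigma> x) * k x + 2 * of_real (\<sigma> x) ^ 2 * m x ^ 2 - lam * of_real (\<sigma> x)) * u x $ 1)
          (at x)"
    by (subst has_vector_derivative_cong_ev) (auto simp: power2_eq_square algebra_simps)
qed

text \<open>The left-hand side is the derivative of \<open>w = I - J N\<close>, for \<open>N'\<close> as computed in
  \<open>darboux_transformation\<close> below.\<close>

lemma darboux_matrix_identity:
  fixes M N Z :: "complex^2^2"
  assumes Z: "Z = M + mat lam ** N"
  defines "w \<equiv> mat 1 - Jmat ** N"
  shows "- (Jmat ** (\<sigma> *\<^sub>R (matrix_unit 1 2 ** (Z - M ** Jmat ** N)) - matrix_unit 2 1 ** N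
            - \<sigma> *\<^sub>R (M ** matrix_unit 2 2 ** N) + \<sigma> *\<^sub>R (Z ** matrix_unit 2 1) - N ** matrix_unit 1 2))
         = sl_system_matrix \<sigma> lam (M $ 2 $ 2) (M $ 1 $ 2 + M $ 2 $ 1) ** w - w ** sl_system_matrix \<sigma> lam 0 0"
  unfolding w_def Z
  by (simp add: vec_eq_iff forall_2 sum_2 matrix_matrix_mult_def mat_def matrix_unit_def Jmat_def
      sl_system_matrix_def scaleR_conv_of_real[where 'a=complex] algebra_simps)

lemma riccati_entry:
  fixes M Y Z :: "complex^2^2"
  shows "(\<sigma> *\<^sub>R (matrix_unit 1 2 ** Y) - matrix_unit 2 1 ** M - \<sigma> *\<^sub>R (M ** matrix_unit 2 2 ** M)
           + \<sigma> *\<^sub>R (Z ** matrix_unit 2 1) - M ** matrix_unit 1 2) $ 2 $ 2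
         = - (M $ 1 $ 2 + M $ 2 $ 1) - of_real \<sigma> * (M $ 2 $ 2) ^ 2"
  by (simp add: sum_2 matrix_matrix_mult_def matrix_unit_def scaleR_conv_of_real[where 'a=complex]
      power2_eq_square algebra_simps)

lemma riccati_equation:
  fixes P :: "real \<Rightarrow> complex^2^'n" and T :: "real \<Rightarrow> complex^'n^'n" and \<sigma> :: real
  assumes P': "(P has_vector_derivative \<sigma> *\<^sub>R (A ** P x ** matrix_unit 2 1) - P x ** matrix_unit 1 2) (at x)"
    and T': "(T has_vector_derivative - (\<sigma> *\<^sub>R (T x ** P x ** matrix_unit 2 2 ** cadj (P x) ** T x))) (at x)"
  defines "M \<equiv> \<lambda>t. cadj (P t) ** T t ** P t"
  shows "((\<lambda>t. M t $ 2 $ 2) has_vector_derivative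
           - (M x $ 1 $ 2 + M x $ 2 $ 1) - of_real \<sigma> * (M x $ 2 $ 2) ^ 2) (at x)"
proof -
  have "(M has_vector_derivative
      \<sigma> *\<^sub>R (matrix_unit 1 2 ** (cadj (P x) ** cadj A ** T x ** P x)) - matrix_unit 2 1 ** M x
      - \<sigma> *\<^sub>R (M x ** matrix_unit 2 2 ** M x) + \<sigma> *\<^sub>R (cadj (P x) ** T x ** A ** P x ** matrix_unit 2 1)
      - M x ** matrix_unit 1 2) (at x)"
    using has_vector_derivative_cadj_sandwich[OF P' T'] unfolding M_def
    by (simp add: matrix_normalize algebra_simps)
  from bounded_linear.has_vector_derivative[OF bounded_linear_vec_nth
      bounded_linear.has_vector_derivative[OF bounded_linear_vec_nth this], of 2 2]
  show ?thesis
    by (simp only: riccati_entry)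
qed

lemma darboux_transformation:
  fixes P :: "real \<Rightarrow> complex^2^'n" and S :: "real \<Rightarrow> complex^'n^'n" and A :: "complex^'n^'n"
    and y :: "real \<Rightarrow> complex^2" and \<sigma> :: real
  assumes P': "(P has_vector_derivative \<sigma> *\<^sub>R (A ** P x ** matrix_unit 2 1) - P x ** matrix_unit 1 2) (at x)"
    and S': "(S has_vector_derivative \<sigma> *\<^sub>R (P x ** matrix_unit 2 2 ** cadj (P x))) (at x)"
    and U: "open U" "x \<in> U" and S_inv: "\<And>t. t \<in> U \<Longrightarrow> det (S t) \<noteq> 0"
    and commutator: "A ** S x - S x ** cadj A = P x ** Jmat ** cadj (P x)"
    and lam: "det (A - mat lam) \<noteq> 0"
    and y': "(y has_vector_derivative sl_system_matrix \<sigma> lam 0 0 *v y x) (at x)"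
  defines "M \<equiv> \<lambda>t. cadj (P t) ** matrix_inv (S t) ** P t"
    and "w \<equiv> \<lambda>t. mat 1 - Jmat ** cadj (P t) ** matrix_inv (S t) ** matrix_inv (A - mat lam) ** P t"
  shows "((\<lambda>t. w t *v y t) has_vector_derivative
           sl_system_matrix \<sigma> lam (M x $ 2 $ 2) (M x $ 1 $ 2 + M x $ 2 $ 1) *v (w x *v y x)) (at x)"
    and "((\<lambda>t. M t $ 2 $ 2) has_vector_derivative
           - (M x $ 1 $ 2 + M x $ 2 $ 1) - of_real \<sigma> * (M x $ 2 $ 2) ^ 2) (at x)"
proof -
  define T where "T = (\<lambda>t. matrix_inv (S t))"
  define R where "R = matrix_inv (A - mat lam)"
  define N where "N = (\<lambda>t. cadj (P t) ** T t ** R ** P t)"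
  define Z where "Z = cadj (P x) ** T x ** A ** R ** P x"
  have M_T: "M = (\<lambda>t. cadj (P t) ** T t ** P t)"
    by (simp add: M_def T_def)
  have T': "(T has_vector_derivative - (\<sigma> *\<^sub>R (T x ** P x ** matrix_unit 2 2 ** cadj (P x) ** T x))) (at x)"
    using has_vector_derivative_matrix_inv[OF S' U S_inv] by (simp add: T_def matrix_normalize)
  show "((\<lambda>t. M t $ 2 $ 2) has_vector_derivative
           - (M x $ 1 $ 2 + M x $ 2 $ 1) - of_real \<sigma> * (M x $ 2 $ 2) ^ 2) (at x)"
    using riccati_equation[OF P' T'] by (simp add: M_T)
  \<comment> \<open>Rewriting \<open>A\<^sup>* S\<^sup>-\<^sup>1\<close> by the commutator identity and moving \<open>A\<close> past \<open>R\<close> closes \<open>N'\<close>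
     up in terms of \<open>M\<close>, \<open>N\<close> and \<open>Z = M + \<lambda> N\<close>.\<close>
  have AT: "X ** cadj A ** T x = X ** T x ** A - X ** T x ** P x ** Jmat ** cadj (P x) ** T x"
    for X :: "complex^'n^2"
    unfolding T_def by (rule matrix_inv_commutator[OF S_inv[OF U(2)] commutator])
  have RA: "X ** R ** A = X ** A ** R" for X :: "complex^'n^2"
    by (simp add: R_def mult_resolvent[OF lam] resolvent_mult[OF lam] flip: matrix_mul_assoc)
  have Z_MN: "Z = M x + mat lam ** N x"
  proof -
    have "Z = cadj (P x) ** T x ** (A ** R) ** P x"
      by (simp add: Z_def matrix_mul_assoc)
    also have "\<dots> = M x + cadj (P x) ** T x ** mat lam ** R ** P x"
      by (simp add: R_def mult_resolvent[OF lam] M_T matrix_normalize)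
    also have "\<dots> = M x + mat lam ** N x"
      by (simp add: N_def matrix_mul_assoc flip: mat_mult_commute)
    finally show ?thesis .
  qed
  have TR': "((\<lambda>t. T t ** R) has_vector_derivative
      - (\<sigma> *\<^sub>R (T x ** P x ** matrix_unit 2 2 ** cadj (P x) ** T x)) ** R) (at x)"
    by (rule matrix_mult.has_vector_derivative[OF T' has_vector_derivative_const, simplified])
  have N': "(N has_vector_derivative
      \<sigma> *\<^sub>R (matrix_unit 1 2 ** (Z - M x ** Jmat ** N x)) - matrix_unit 2 1 ** N x
      - \<sigma> *\<^sub>R (M x ** matrix_unit 2 2 ** N x) + \<sigma> *\<^sub>R (Z ** matrix_unit 2 1) - N x ** matrix_unit 1 2) (at x)"
    using has_vector_derivative_cadj_sandwich[OF P' TR']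
    unfolding N_def by (simp add: Z_def M_T matrix_normalize AT RA algebra_simps)
  have w_N: "w = (\<lambda>t. mat 1 - Jmat ** N t)"
    by (simp add: w_def N_def T_def R_def matrix_mul_assoc)
  have w': "(w has_vector_derivative
      sl_system_matrix \<sigma> lam (M x $ 2 $ 2) (M x $ 1 $ 2 + M x $ 2 $ 1) ** w x
      - w x ** sl_system_matrix \<sigma> lam 0 0) (at x)"
    using has_vector_derivative_diff[OF has_vector_derivative_const
        bounded_linear.has_vector_derivative[OF matrix_mult.bounded_linear_right N']]
    unfolding w_N by (simp add: darboux_matrix_identity[OF Z_MN, symmetric])
  show "((\<lambda>t. w t *v y t) has_vector_derivative
           sl_system_matrix \<sigma> lam (M x $ 2 $ 2) (M x $ 1 $ 2 + M x $ 2 $ 1) *v (w x *v y x)) (at x)"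
    using matrix_vector_mult.has_vector_derivative[OF w' y']
    by (simp add: matrix_vector_mul_assoc matrix_vector_mult_diff_rdistrib)
qed

section \<open>Exponential solutions\<close>

definition two_column_matrix :: "'a^'n \<Rightarrow> 'a^'n \<Rightarrow> 'a^2^'n" where
  "two_column_matrix u v = (\<chi> i j. if j = 1 then u $ i else v $ i)"

lemma has_vector_derivative_two_column_matrix:
  fixes u v :: "real \<Rightarrow> complex^'n"
  assumes "(u has_vector_derivative u') (at t)" "(v has_vector_derivative v') (at t)"
  shows "((\<lambda>t. two_column_matrix (u t) (v t)) has_vector_derivative two_column_matrix u' v') (at t)"
proof (intro has_vector_derivative_vec)
  fix i j
  show "((\<lambda>t. two_column_matrix (u t) (v t) $ i $ j) has_vector_derivative two_column_matrix u' v' $ i $ j) (at t)"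
    using bounded_linear.has_vector_derivative[OF bounded_linear_vec_nth assms(1), of i]
      bounded_linear.has_vector_derivative[OF bounded_linear_vec_nth assms(2), of i]
    by (simp add: two_column_matrix_def)
qed

lemma matrix_mult_two_column_matrix: "A ** two_column_matrix u v = two_column_matrix (A *v u) (A *v v)"
  by (simp add: two_column_matrix_def matrix_matrix_mult_def matrix_vector_mult_def vec_eq_iff)

lemma two_column_matrix_mult_unit:
  "two_column_matrix u v ** matrix_unit 2 1 = two_column_matrix v 0"
  "two_column_matrix u v ** matrix_unit 1 2 = two_column_matrix 0 u"
  by (simp_all add: two_column_matrix_def matrix_unit_def matrix_matrix_mult_def vec_eq_iff sum_2 forall_2)

lemma two_column_matrix_shift:
  "two_column_matrix (\<sigma> *\<^sub>R (A *v v)) (- u)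
     = \<sigma> *\<^sub>R (A ** two_column_matrix u v ** matrix_unit 2 1) - two_column_matrix u v ** matrix_unit 1 2"
  by (simp add: two_column_matrix_mult_unit matrix_mult_two_column_matrix flip: matrix_mul_assoc)
     (simp add: two_column_matrix_def vec_eq_iff)

lemma outer_eq_two_column_matrix:
  "outer v = two_column_matrix u v ** matrix_unit 2 2 ** cadj (two_column_matrix u v)"
  by (simp add: outer_def two_column_matrix_def matrix_unit_def cadj_def matrix_matrix_mult_def vec_eq_iff sum_2)

lemma two_column_matrix_Jmat_cadj_eq_0:
  assumes "c * cnj d = d * cnj c"
  shows "two_column_matrix (c *s v) (d *s v) ** Jmat ** cadj (two_column_matrix (c *s v) (d *s v)) = 0"
  using assms by (simp add: two_column_matrix_def Jmat_def cadj_def matrix_matrix_mult_def vec_eq_iff sum_2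
      forall_2 algebra_simps)

definition exp_combination :: "complex^'n^'n \<Rightarrow> complex^'n \<Rightarrow> complex^'n \<Rightarrow> real \<Rightarrow> complex^'n" where
  "exp_combination B a b t = mexp (t *\<^sub>R B) *v a + mexp (t *\<^sub>R - B) *v b"

lemma has_vector_derivative_exp_combination:
  "(exp_combination B a b has_vector_derivative B *v exp_combination B a (- b) t) (at t)"
proof -
  have mexp_mult: "((\<lambda>t. mexp (t *\<^sub>R C) *v v) has_vector_derivative (C ** mexp (t *\<^sub>R C)) *v v) (at t)"
    for C :: "complex^'n^'n" and v
    using matrix_vector_mult.has_vector_derivative[OF has_vector_derivative_mexp has_vector_derivative_const[of v]]
    by simp
  have "(exp_combination B a b has_vector_derivative
      (B ** mexp (t *\<^sub>R B)) *v a + (- B ** mexp (t *\<^sub>R - B)) *v b) (at t)"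
    unfolding exp_combination_def by (intro has_vector_derivative_add mexp_mult)
  then show ?thesis
    by (simp add: exp_combination_def matrix_vector_mult.diff_right matrix_vector_mult.minus_right
        matrix_mult.minus_left matrix_vector_mult.minus_left flip: matrix_vector_mul_assoc)
qed

text \<open>The matrix \<open>[\<Lambda>\<^sub>1 \<Lambda>\<^sub>2]\<close> with \<open>\<Lambda>\<^sub>2 = e\<^sup>t\<^sup>B a + e\<^sup>-\<^sup>t\<^sup>B b\<close> and \<open>\<Lambda>\<^sub>1 = -\<Lambda>\<^sub>2'\<close>.\<close>

definition exp_pair :: "complex^'n^'n \<Rightarrow> complex^'n \<Rightarrow> complex^'n \<Rightarrow> real \<Rightarrow> complex^2^'n" where
  "exp_pair B a b t = two_column_matrix (- (B *v exp_combination B a (- b) t)) (exp_combination B a b t)"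

lemma has_vector_derivative_exp_pair:
  assumes "- (B ** B) = \<sigma> *\<^sub>R A"
  shows "(exp_pair B a b has_vector_derivative
           \<sigma> *\<^sub>R (A ** exp_pair B a b t ** matrix_unit 2 1) - exp_pair B a b t ** matrix_unit 1 2) (at t)"
proof -
  have "(exp_pair B a b has_vector_derivative two_column_matrix (- (B *v (B *v exp_combination B a b t)))
      (B *v exp_combination B a (- b) t)) (at t)"
    unfolding exp_pair_def[abs_def]
    using has_vector_derivative_exp_combination[of B a "- b" t]
    by (intro has_vector_derivative_two_column_matrix has_vector_derivative_minus
        bounded_linear.has_vector_derivative[OF matrix_vector_mult.bounded_linear_right]
        has_vector_derivative_exp_combination) simp_all
  moreover have "- (B *v (B *v v)) = \<sigma> *\<^sub>R (A *v v)" for v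
    by (metis assms matrix_vector_mul_assoc matrix_vector_mult.minus_left matrix_vector_mult.scaleR_left)
  ultimately show ?thesis
    by (simp add: exp_pair_def two_column_matrix_shift[symmetric])
qed

lemma exp_pair_zero: "exp_pair B a b 0 = two_column_matrix (- (B *v (a - b))) (a + b)"
  by (simp add: exp_pair_def exp_combination_def matrix_vector_mult.diff_right)

lemma has_vector_derivative_Jmat_sandwich:
  fixes P :: "real \<Rightarrow> complex^2^'n"
  assumes P': "(P has_vector_derivative \<sigma> *\<^sub>R (A ** P t ** matrix_unit 2 1) - P t ** matrix_unit 1 2) (at t)"
  shows "((\<lambda>t. P t ** Jmat ** cadj (P t)) has_vector_derivative
           \<sigma> *\<^sub>R (A ** (P t ** matrix_unit 2 2 ** cadj (P t)) - P t ** matrix_unit 2 2 ** cadj (P t) ** cadj A))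
          (at t)"
proof -
  have "matrix_unit 2 1 ** Jmat = (matrix_unit 2 2 :: complex^2^2)"
    "matrix_unit 1 2 ** Jmat = - (matrix_unit 1 1 :: complex^2^2)"
    "Jmat ** matrix_unit 1 2 = - (matrix_unit 2 2 :: complex^2^2)"
    "Jmat ** matrix_unit 2 1 = (matrix_unit 1 1 :: complex^2^2)"
    by (simp_all add: matrix_unit_def Jmat_def matrix_matrix_mult_def vec_eq_iff sum_2 forall_2)
  then have unit_Jmat: "X ** matrix_unit 2 1 ** Jmat = X ** (matrix_unit 2 2 :: complex^2^2)"
    "X ** matrix_unit 1 2 ** Jmat = - (X ** (matrix_unit 1 1 :: complex^2^2))"
    "X ** Jmat ** matrix_unit 1 2 = - (X ** (matrix_unit 2 2 :: complex^2^2))"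
    "X ** Jmat ** matrix_unit 2 1 = X ** (matrix_unit 1 1 :: complex^2^2)" for X :: "complex^2^'n"
    by (simp_all add: matrix_mult.minus_right flip: matrix_mul_assoc)
  show ?thesis
    using matrix_mult.has_vector_derivative[OF
        matrix_mult.has_vector_derivative[OF P' has_vector_derivative_const[of Jmat]]
        bounded_linear.has_vector_derivative[OF bounded_linear_cadj P']]
    by (simp add: matrix_normalize unit_Jmat algebra_simps)
qed

lemma commutator_integral:
  fixes P :: "real \<Rightarrow> complex^2^'n"
  assumes P': "\<And>t. (P has_vector_derivative \<sigma> *\<^sub>R (A ** P t ** matrix_unit 2 1) - P t ** matrix_unit 1 2) (at t)"
    and "a \<le> b"
  defines "F \<equiv> \<lambda>t. P t ** matrix_unit 2 2 ** cadj (P t)"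
  shows "\<sigma> *\<^sub>R (A ** integral {a..b} F - integral {a..b} F ** cadj A)
           = P b ** Jmat ** cadj (P b) - P a ** Jmat ** cadj (P a)"
proof -
  define L where "L M = \<sigma> *\<^sub>R (A ** M - M ** cadj A)" for M :: "complex^'n^'n"
  have "bounded_linear L"
    unfolding L_def
    by (intro bounded_linear_compose[OF bounded_linear_scaleR_right] bounded_linear_sub
        matrix_mult.bounded_linear_right matrix_mult.bounded_linear_left)
  moreover have "F integrable_on {a..b}"
    unfolding F_def
    using P' by (intro integrable_continuous_interval continuous_on_cadj_sandwich)
      (blast intro: differentiableI_vector)
  ultimately have "L (integral {a..b} F) = integral {a..b} (L \<circ> F)"
    by (simp add: integral_linear)
  also have "\<dots> = P b ** Jmat ** cadj (P b) - P a ** Jmat ** cadj (P a)"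
    using \<open>a \<le> b\<close> has_vector_derivative_Jmat_sandwich[OF P']
    by (intro integral_unique fundamental_theorem_of_calculus)
       (auto simp: L_def F_def o_def intro: has_vector_derivative_at_within)
  finally show ?thesis
    by (simp add: L_def)
qed

lemma cscale_component: "cscale c A $ i $ j = c * A $ i $ j"
  by (simp add: cscale_def matrix_matrix_mult_def mat_def if_distrib if_distribR cong: if_cong)

lemma cscale_of_real: "cscale (of_real t) A = t *\<^sub>R A"
  and cscale_mult_of_real: "cscale (c * of_real t) A = t *\<^sub>R cscale c A"
  and cscale_uminus: "cscale (- c) A = - cscale c A"
  by (simp_all add: vec_eq_iff cscale_component scaleR_conv_of_real[where 'a=complex])

lemma cscale_mult_vector: "cscale c A *v v = c *s (A *v v)"
  by (simp add: vec_eq_iff matrix_vector_mult_def cscale_component sum_distrib_left mult.assoc)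

lemma mat_mult_vector: "mat c *v v = c *s v"
  by (simp add: vec_eq_iff matrix_vector_mult_def mat_def if_distrib if_distribR cong: if_cong)

lemma matrix_vector_mult_smult: "A *v (c *s v) = c *s (A *v (v :: 'a::comm_ring_1^'n))"
  by (simp add: vec_eq_iff matrix_vector_mult_def sum_distrib_left mult.left_commute)

definition Pi_pos :: "complex^'n^'n \<Rightarrow> complex \<Rightarrow> complex^'n \<Rightarrow> real \<Rightarrow> complex^2^'n" where
  "Pi_pos \<alpha> \<mu> g = exp_pair (cscale \<i> \<alpha>) ((cscale \<mu> \<alpha> + mat 1) *v g) ((cscale \<mu> \<alpha> - mat 1) *v g)"

definition Pi_neg :: "complex^'n^'n \<Rightarrow> complex \<Rightarrow> complex^'n \<Rightarrow> real \<Rightarrow> complex^2^'n" where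
  "Pi_neg \<alpha> \<mu> g = exp_pair \<alpha> ((cscale \<mu> \<alpha> + mat \<i>) *v g) ((cscale \<mu> \<alpha> - mat \<i>) *v g)"

lemma has_vector_derivative_Pi_pos:
  "(Pi_pos \<alpha> \<mu> g has_vector_derivative
     1 *\<^sub>R (\<alpha> ** \<alpha> ** Pi_pos \<alpha> \<mu> g t ** matrix_unit 2 1) - Pi_pos \<alpha> \<mu> g t ** matrix_unit 1 2) (at t)"
proof -
  have "- (cscale \<i> \<alpha> ** cscale \<i> \<alpha>) = 1 *\<^sub>R (\<alpha> ** \<alpha>)"
    by (simp add: vec_eq_iff cscale_component matrix_matrix_mult_def sum_negf algebra_simps)
  then show ?thesis
    unfolding Pi_pos_def by (rule has_vector_derivative_exp_pair)
qed

lemma has_vector_derivative_Pi_neg: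
  "(Pi_neg \<alpha> \<mu> g has_vector_derivative
     (- 1) *\<^sub>R (\<alpha> ** \<alpha> ** Pi_neg \<alpha> \<mu> g t ** matrix_unit 2 1) - Pi_neg \<alpha> \<mu> g t ** matrix_unit 1 2) (at t)"
  unfolding Pi_neg_def by (rule has_vector_derivative_exp_pair) simp

lemma exp_pair_zero_cscale:
  "exp_pair B ((cscale \<mu> \<alpha> + mat c) *v g) ((cscale \<mu> \<alpha> - mat c) *v g) 0
     = two_column_matrix (- (B *v ((2 * c) *s g))) ((2 * \<mu>) *s (\<alpha> *v g))"
proof -
  have "(cscale \<mu> \<alpha> + mat c) *v g - (cscale \<mu> \<alpha> - mat c) *v g = (2 * c) *s g"
    "(cscale \<mu> \<alpha> + mat c) *v g + (cscale \<mu> \<alpha> - mat c) *v g = (2 * \<mu>) *s (\<alpha> *v g)"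
    by (simp_all add: cscale_mult_vector mat_mult_vector vec_eq_iff algebra_simps)
  then show ?thesis
    by (simp add: exp_pair_zero)
qed

lemma Pi_pos_zero: "Pi_pos \<alpha> \<mu> g 0 = two_column_matrix ((- 2 * \<i>) *s (\<alpha> *v g)) ((2 * \<mu>) *s (\<alpha> *v g))"
  and Pi_neg_zero: "Pi_neg \<alpha> \<mu> g 0 = two_column_matrix ((- 2 * \<i>) *s (\<alpha> *v g)) ((2 * \<mu>) *s (\<alpha> *v g))"
  by (simp_all add: Pi_pos_def Pi_neg_def exp_pair_zero_cscale cscale_mult_vector matrix_vector_mult_smult)

lemma PiM_eq_two_column_matrix: "PiM \<alpha> \<mu> g t = two_column_matrix (Lam1 \<alpha> \<mu> g t) (Lam2 \<alpha> \<mu> g t)"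
  by (simp add: PiM_def two_column_matrix_def)

lemma PiM_eq_Pi_pos: "0 \<le> t \<Longrightarrow> PiM \<alpha> \<mu> g t = Pi_pos \<alpha> \<mu> g t"
  by (simp add: PiM_eq_two_column_matrix Pi_pos_def exp_pair_def exp_combination_def Lam1_def Lam2_def
      cscale_mult_of_real cscale_uminus matrix_vector_mult.minus_right)

lemma PiM_eq_Pi_neg:
  assumes "t \<le> 0"
  shows "PiM \<alpha> \<mu> g t = Pi_neg \<alpha> \<mu> g t"
proof (cases "t = 0")
  case True
  then show ?thesis
    by (simp add: PiM_eq_Pi_pos Pi_pos_zero Pi_neg_zero)
next
  case False
  with assms show ?thesis
    by (simp add: PiM_eq_two_column_matrix Pi_neg_def exp_pair_def exp_combination_def Lam1_def Lam2_def
        cscale_of_real cscale_uminus matrix_vector_mult.minus_right)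
qed

lemma PiM_has_vector_derivative:
  assumes "x \<noteq> 0"
  shows "(PiM \<alpha> \<mu> g has_vector_derivative
           sgn x *\<^sub>R (\<alpha> ** \<alpha> ** PiM \<alpha> \<mu> g x ** matrix_unit 2 1) - PiM \<alpha> \<mu> g x ** matrix_unit 1 2) (at x)"
proof (cases "x > 0")
  case True
  then have "(Pi_pos \<alpha> \<mu> g has_vector_derivative
      sgn x *\<^sub>R (\<alpha> ** \<alpha> ** PiM \<alpha> \<mu> g x ** matrix_unit 2 1) - PiM \<alpha> \<mu> g x ** matrix_unit 1 2) (at x)"
    using has_vector_derivative_Pi_pos[of \<alpha> \<mu> g x] by (simp add: PiM_eq_Pi_pos)
  then show ?thesis
    by (rule has_vector_derivative_transform_within_open[where S = "{0<..}"])
       (use True in \<open>simp_all add: PiM_eq_Pi_pos\<close>)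
next
  case False
  with assms have "x < 0"
    by simp
  then have "(Pi_neg \<alpha> \<mu> g has_vector_derivative
      sgn x *\<^sub>R (\<alpha> ** \<alpha> ** PiM \<alpha> \<mu> g x ** matrix_unit 2 1) - PiM \<alpha> \<mu> g x ** matrix_unit 1 2) (at x)"
    using has_vector_derivative_Pi_neg[of \<alpha> \<mu> g x] by (simp add: PiM_eq_Pi_neg)
  then show ?thesis
    by (rule has_vector_derivative_transform_within_open[where S = "{..<0}"])
       (use \<open>x < 0\<close> in \<open>simp_all add: PiM_eq_Pi_neg\<close>)
qed

lemma outer_Lam2: "outer (Lam2 \<alpha> \<mu> g t) = PiM \<alpha> \<mu> g t ** matrix_unit 2 2 ** cadj (PiM \<alpha> \<mu> g t)"
  unfolding PiM_eq_two_column_matrix by (rule outer_eq_two_column_matrix)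

lemma SM_pos:
  "0 < x \<Longrightarrow> SM \<alpha> \<mu> g x = integral {0..x} (\<lambda>t. Pi_pos \<alpha> \<mu> g t ** matrix_unit 2 2 ** cadj (Pi_pos \<alpha> \<mu> g t))"
  unfolding SM_def by (auto intro!: integral_cong simp: outer_Lam2 PiM_eq_Pi_pos)

lemma SM_neg:
  "x < 0 \<Longrightarrow> SM \<alpha> \<mu> g x = integral {x..0} (\<lambda>t. Pi_neg \<alpha> \<mu> g t ** matrix_unit 2 2 ** cadj (Pi_neg \<alpha> \<mu> g t))"
  unfolding SM_def by (auto intro!: integral_cong simp: outer_Lam2 PiM_eq_Pi_neg)

lemma SM_has_vector_derivative:
  assumes "x \<noteq> 0"
  shows "(SM \<alpha> \<mu> g has_vector_derivative sgn x *\<^sub>R (PiM \<alpha> \<mu> g x ** matrix_unit 2 2 ** cadj (PiM \<alpha> \<mu> g x))) (at x)"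
proof (cases "x > 0")
  case True
  have "continuous_on UNIV (\<lambda>t. Pi_pos \<alpha> \<mu> g t ** matrix_unit 2 2 ** cadj (Pi_pos \<alpha> \<mu> g t))"
    using has_vector_derivative_Pi_pos by (blast intro: continuous_on_cadj_sandwich differentiableI_vector)
  from has_vector_derivative_integral_upper[OF this True]
  have "((\<lambda>u. integral {0..u} (\<lambda>t. Pi_pos \<alpha> \<mu> g t ** matrix_unit 2 2 ** cadj (Pi_pos \<alpha> \<mu> g t)))
      has_vector_derivative sgn x *\<^sub>R (PiM \<alpha> \<mu> g x ** matrix_unit 2 2 ** cadj (PiM \<alpha> \<mu> g x))) (at x)"
    using True by (simp add: PiM_eq_Pi_pos)
  then show ?thesis
    by (rule has_vector_derivative_transform_within_open[where S = "{0<..}"]) (use True in \<open>auto simp: SM_pos\<close>)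
next
  case False
  with assms have "x < 0"
    by simp
  have "continuous_on UNIV (\<lambda>t. Pi_neg \<alpha> \<mu> g t ** matrix_unit 2 2 ** cadj (Pi_neg \<alpha> \<mu> g t))"
    using has_vector_derivative_Pi_neg by (blast intro: continuous_on_cadj_sandwich differentiableI_vector)
  from has_vector_derivative_integral_lower[OF this \<open>x < 0\<close>]
  have "((\<lambda>u. integral {u..0} (\<lambda>t. Pi_neg \<alpha> \<mu> g t ** matrix_unit 2 2 ** cadj (Pi_neg \<alpha> \<mu> g t)))
      has_vector_derivative sgn x *\<^sub>R (PiM \<alpha> \<mu> g x ** matrix_unit 2 2 ** cadj (PiM \<alpha> \<mu> g x))) (at x)"
    using \<open>x < 0\<close> by (simp add: PiM_eq_Pi_neg)
  then show ?thesis
    by (rule has_vector_derivative_transform_within_open[where S = "{..<0}"])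
       (use \<open>x < 0\<close> in \<open>auto simp: SM_neg\<close>)
qed

lemma SM_commutator:
  assumes \<mu>: "cnj \<mu> = - \<mu>" and "x \<noteq> 0"
  shows "\<alpha> ** \<alpha> ** SM \<alpha> \<mu> g x - SM \<alpha> \<mu> g x ** cadj (\<alpha> ** \<alpha>) = PiM \<alpha> \<mu> g x ** Jmat ** cadj (PiM \<alpha> \<mu> g x)"
proof -
  \<comment> \<open>This is the only place where \<open>\<mu>\<close> being purely imaginary is used.\<close>
  have \<Phi>0: "Pi_pos \<alpha> \<mu> g 0 ** Jmat ** cadj (Pi_pos \<alpha> \<mu> g 0) = 0"
    "Pi_neg \<alpha> \<mu> g 0 ** Jmat ** cadj (Pi_neg \<alpha> \<mu> g 0) = 0"
    unfolding Pi_pos_zero Pi_neg_zero by (rule two_column_matrix_Jmat_cadj_eq_0, simp add: \<mu>)+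
  show ?thesis
  proof (cases "x > 0")
    case True
    then show ?thesis
      using commutator_integral[OF has_vector_derivative_Pi_pos[of \<alpha> \<mu> g], of 0 x]
      by (simp add: \<Phi>0 SM_pos PiM_eq_Pi_pos)
  next
    case False
    with \<open>x \<noteq> 0\<close> have "x < 0"
      by simp
    from commutator_integral[OF has_vector_derivative_Pi_neg[of \<alpha> \<mu> g] less_imp_le[OF this]]
    have "\<alpha> ** \<alpha> ** SM \<alpha> \<mu> g x - SM \<alpha> \<mu> g x ** cadj (\<alpha> ** \<alpha>) = Pi_neg \<alpha> \<mu> g x ** Jmat ** cadj (Pi_neg \<alpha> \<mu> g x)"
      by (simp only: \<Phi>0 SM_neg[OF \<open>x < 0\<close>] scaleR_minus1_left diff_0 neg_equal_iff_equal)
    with \<open>x < 0\<close> show ?thesis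
      by (simp add: PiM_eq_Pi_neg)
  qed
qed

lemma has_vector_derivative_conjugated_mexp:
  fixes C D G :: "complex^'n^'n"
  assumes "C ** D = G ** C"
  shows "((\<lambda>t. (C ** mexp (t *\<^sub>R D) ** K) *v h) has_vector_derivative
           G *v ((C ** mexp (t *\<^sub>R D) ** K) *v h)) (at t)"
proof -
  have "((\<lambda>t. (C ** mexp (t *\<^sub>R D) ** K) *v h) has_vector_derivative
      (C ** (D ** mexp (t *\<^sub>R D)) ** K) *v h) (at t)"
    by (intro matrix_vector_mult.has_vector_derivative[where g' = 0, simplified]
        matrix_mult.has_vector_derivative[where g' = 0, simplified]
        bounded_linear.has_vector_derivative[OF matrix_mult.bounded_linear_right]
        has_vector_derivative_mexp has_vector_derivative_const)
  then show ?thesis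
    by (simp add: assms matrix_mul_assoc matrix_vector_mul_assoc)
qed

lemma yinit_has_vector_derivative:
  assumes "s ^ 2 = lam" "x \<noteq> 0"
  shows "(yinit s h has_vector_derivative sl_system_matrix (sgn x) lam 0 0 *v yinit s h x) (at x)"
proof (cases "x > 0")
  case True
  have "Tp s ** Dp s = sl_system_matrix 1 lam 0 0 ** Tp s"
    by (simp add: Tp_def Dp_def sl_system_matrix_def matrix_matrix_mult_def vec_eq_iff forall_2 sum_2
        power2_eq_square algebra_simps flip: assms(1))
  from has_vector_derivative_conjugated_mexp[OF this, where K = "matrix_inv (Tp s)" and h = h and t = x] True
  have "((\<lambda>t. (Tp s ** mexp (t *\<^sub>R Dp s) ** matrix_inv (Tp s)) *v h) has_vector_derivative
      sl_system_matrix (sgn x) lam 0 0 *v yinit s h x) (at x)"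
    by (simp add: yinit_def cscale_of_real)
  then show ?thesis
    by (rule has_vector_derivative_transform_within_open[where S = "{0<..}"])
       (use True in \<open>simp_all add: yinit_def cscale_of_real\<close>)
next
  case False
  with assms have "x < 0"
    by simp
  have "Tm s ** Dm s = sl_system_matrix (- 1) lam 0 0 ** Tm s"
    by (simp add: Tm_def Dm_def sl_system_matrix_def matrix_matrix_mult_def vec_eq_iff forall_2 sum_2
        power2_eq_square algebra_simps flip: assms(1))
  from has_vector_derivative_conjugated_mexp[OF this, where K = "matrix_inv (Tm s)" and h = h and t = x] \<open>x < 0\<close>
  have "((\<lambda>t. (Tm s ** mexp (t *\<^sub>R Dm s) ** matrix_inv (Tm s)) *v h) has_vector_derivative
      sl_system_matrix (sgn x) lam 0 0 *v yinit s h x) (at x)"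
    by (simp add: yinit_def cscale_of_real)
  then show ?thesis
    by (rule has_vector_derivative_transform_within_open[where S = "{..<0}"])
       (use \<open>x < 0\<close> in \<open>simp_all add: yinit_def cscale_of_real\<close>)
qed

lemma eventually_sgn_eq:
  fixes x :: real
  assumes "x \<noteq> 0"
  shows "\<forall>\<^sub>F t in nhds x. sgn t = sgn x"
proof (cases "x > 0")
  case True
  then show ?thesis
    unfolding eventually_nhds by (intro exI[of _ "{0<..}"]) auto
next
  case False
  with assms show ?thesis
    unfolding eventually_nhds by (intro exI[of _ "{..<0}"]) auto
qed

lemma qbreve_eq:
  assumes "M = cadj (PiM \<alpha> \<mu> g x) ** matrix_inv (SM \<alpha> \<mu> g x) ** PiM \<alpha> \<mu> g x"
  shows "qbreve \<alpha> \<mu> g x = 2 * of_real (sgn x) * (M $ 1 $ 2 + M $ 2 $ 1) + 2 * (M $ 2 $ 2) ^ 2"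
proof -
  have "XM \<alpha> \<mu> g x = Jmat ** M"
    using assms by (simp add: XM_def matrix_mul_assoc)
  then show ?thesis
    by (simp add: qbreve_def Jmat_def matrix_matrix_mult_def sum_2 algebra_simps)
qed

lemma wA_yinit_first_entry_derivatives:
  fixes h :: "complex^2"
  assumes mu_imag: "cnj \<mu> = - \<mu>" and lam_reg: "det (\<alpha> ** \<alpha> - mat lam) \<noteq> 0" and sqrt: "s ^ 2 = lam"
    and U: "open U" "x \<in> U" "0 \<notin> U" and S_inv: "\<And>t. t \<in> U \<Longrightarrow> det (SM \<alpha> \<mu> g t) \<noteq> 0"
  defines "M \<equiv> \<lambda>t. cadj (PiM \<alpha> \<mu> g t) ** matrix_inv (SM \<alpha> \<mu> g t) ** PiM \<alpha> \<mu> g t"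
    and "u \<equiv> \<lambda>t. wA \<alpha> \<mu> g t lam *v yinit s h t"
  shows "((\<lambda>t. u t $ 1) has_vector_derivative - of_real (sgn x) * M x $ 2 $ 2 * u x $ 1 + u x $ 2) (at x)"
    and "((\<lambda>t. - of_real (sgn t) * M t $ 2 $ 2 * u t $ 1 + u t $ 2) has_vector_derivative
           (qbreve \<alpha> \<mu> g x - lam * of_real (sgn x)) * u x $ 1) (at x)"
proof -
  from U have "x \<noteq> 0"
    by auto
  then have sgn_sq: "of_real (sgn x) ^ 2 = (1 :: complex)"
    by (auto simp: sgn_if)
  have "(u has_vector_derivative
      sl_system_matrix (sgn x) lam (M x $ 2 $ 2) (M x $ 1 $ 2 + M x $ 2 $ 1) *v u x) (at x)"
    and "((\<lambda>t. M t $ 2 $ 2) has_vector_derivative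
           - (M x $ 1 $ 2 + M x $ 2 $ 1) - of_real (sgn x) * (M x $ 2 $ 2) ^ 2) (at x)"
    using darboux_transformation[OF PiM_has_vector_derivative[OF \<open>x \<noteq> 0\<close>] SM_has_vector_derivative[OF \<open>x \<noteq> 0\<close>]
        U(1,2) S_inv SM_commutator[OF mu_imag \<open>x \<noteq> 0\<close>] lam_reg yinit_has_vector_derivative[OF sqrt \<open>x \<noteq> 0\<close>]]
    by (simp_all add: u_def wA_def M_def)
  from sturm_liouville_of_sl_system[where \<sigma> = sgn and m = "\<lambda>t. M t $ 2 $ 2"
      and k = "\<lambda>t. M t $ 1 $ 2 + M t $ 2 $ 1", OF eventually_sgn_eq[OF \<open>x \<noteq> 0\<close>] this]
  show "((\<lambda>t. u t $ 1) has_vector_derivative - of_real (sgn x) * M x $ 2 $ 2 * u x $ 1 + u x $ 2) (at x)"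
    and "((\<lambda>t. - of_real (sgn t) * M t $ 2 $ 2 * u t $ 1 + u t $ 2) has_vector_derivative
           (qbreve \<alpha> \<mu> g x - lam * of_real (sgn x)) * u x $ 1) (at x)"
    by (simp_all add: qbreve_eq[OF refl] M_def sgn_sq algebra_simps)
qed

theorem corollary8p2:
  fixes \<alpha> :: "complex^'n^'n" and g :: "complex^'n" and \<mu> :: complex
    and l :: real and lam s :: complex and h :: "complex^2"
  assumes mu_imag: "cnj \<mu> = - \<mu>"
    and det1: "det (cscale \<mu> \<alpha> + mat 1) \<noteq> 0" "det (cscale \<mu> \<alpha> - mat 1) \<noteq> 0"
    and det2: "det (cscale \<mu> \<alpha> + mat \<i>) \<noteq> 0" "det (cscale \<mu> \<alpha> - mat \<i>) \<noteq> 0"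
    and S_inv: "\<And>x. x \<in> {-l<..<l} \<Longrightarrow> x \<noteq> 0 \<Longrightarrow> det (SM \<alpha> \<mu> g x) \<noteq> 0"
    and lam_nz: "lam \<noteq> 0"
    and lam_reg: "det (\<alpha> ** \<alpha> - mat lam) \<noteq> 0"
    and sqrt: "s^2 = lam"
  shows "\<exists>f' f''. \<forall>x \<in> {-l<..<l} - {0}.
           ((\<lambda>t. (wA \<alpha> \<mu> g t lam *v yinit s h t) $ 1) has_vector_derivative f' x) (at x)
         \<and> (f' has_vector_derivative f'' x) (at x)
         \<and> - f'' x + qbreve \<alpha> \<mu> g x * (wA \<alpha> \<mu> g x lam *v yinit s h x) $ 1
             = lam * of_real (sgn x) * (wA \<alpha> \<mu> g x lam *v yinit s h x) $ 1"
proof -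
  define M where "M t = cadj (PiM \<alpha> \<mu> g t) ** matrix_inv (SM \<alpha> \<mu> g t) ** PiM \<alpha> \<mu> g t" for t
  define u where "u t = wA \<alpha> \<mu> g t lam *v yinit s h t" for t
  define f' where "f' t = - of_real (sgn t) * M t $ 2 $ 2 * u t $ 1 + u t $ 2" for t
  define f'' where "f'' t = (qbreve \<alpha> \<mu> g t - lam * of_real (sgn t)) * u t $ 1" for t
  have U: "open ({-l<..<l} - {0})" "0 \<notin> {-l<..<l} - {0}"
    and S_inv': "\<And>t. t \<in> {-l<..<l} - {0} \<Longrightarrow> det (SM \<alpha> \<mu> g t) \<noteq> 0"
    using S_inv by auto
  have "((\<lambda>t. u t $ 1) has_vector_derivative f' x) (at x) \<and> (f' has_vector_derivative f'' x) (at x)"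
    if "x \<in> {-l<..<l} - {0}" for x
    using wA_yinit_first_entry_derivatives[OF mu_imag lam_reg sqrt U(1) that U(2) S_inv', where h = h]
    unfolding f'_def[abs_def] f''_def M_def[abs_def] u_def[abs_def] by simp
  then show ?thesis
    by (intro exI[of _ f'] exI[of _ f''] ballI) (simp add: u_def f''_def algebra_simps)
qed

end
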